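(* Let $Q$ be a non-degenerate convex quadrangle of perimeter $2$. Then its dual quadrangle $Q^\circ$ is also convex.
   Context: Identify $\mathbb{R}^2$ with $\mathbb{C}$. A quadrangle $Q=ABCD$ is an ordered 4-tuple of points $A,B,C,D\in\mathbb{C}$: $A$ is the first vertex and the order $A\to B\to C\to D\to A$ is the direction of traversal. Its edge vectors are $z_1=B-A$, $z_2=C-B$, $z_3=D-C$, $z_4=A-D$, so $z_1+z_2+z_3+z_4=0$; its perimeter is $|z_1|+|z_2|+|z_3|+|z_4|$. $Q$ is non-degenerate if each pair of consecutive edge vectors $(z_1,z_2),(z_2,z_3),(z_3,z_4),(z_4,z_1)$ consists of nonzero, non-collinear vectors. A non-degenerate quadrangle is self-intersecting if one of the pairs of opposite edges (segments $AB$ and $CD$, or $BC$ and $DA$) intersect; it is convex if it is not self-intersecting and all its interior angles are less than $\pi$; it is non-convex if it is neither self-intersecting nor convex. Associated plane: for a non-degenerate $Q$ of perimeter $2$, choose $u_1,\dots,u_4\in\mathbb{C}$ with $u_k^2=z_k$, where $u_1$ is an arbitrary square root of $z_1$ and for $k=1,2,3$ the sign of $u_{k+1}$ is chosen so that $\operatorname{Im}(\overline{u_k}u_{k+1})$ has the same sign as $\operatorname{Im}(\overline{z_k}z_{k+1})$. Write $u_k=a_k+i b_k$ and $\bar a=(a_1,a_2,a_3,a_4)$, $\bar b=(b_1,b_2,b_3,b_4)$; these are orthonormal in $\mathbb{R}^4$. Let $\Pi=\operatorname{span}(\bar a,\bar b)$ and $\Pi^\perp$ its orthogonal complement. Dual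 quadrangle: choose an orthonormal basis $(\bar c,\bar d)$ of $\Pi^\perp$, put $w_k=(c_k+i d_k)^2$; then $\sum_k w_k=0$ and $\sum_k|w_k|=2$. The dual quadrangle $Q^\circ=KLMN$ is the quadrangle with $L-K=w_1$, $M-L=w_2$, $N-M=w_3$, $K-N=w_4$. It is determined up to rotation, reflection and translation. *)

theory Defs
  imports "HOL-Analysis.Analysis"
begin

definition cross :: "complex \<Rightarrow> complex \<Rightarrow> real" where
  "cross z w = Im (cnj z * w)"

definition edge :: "complex \<Rightarrow> complex \<Rightarrow> complex \<Rightarrow> complex \<Rightarrow> nat \<Rightarrow> complex" where
  "edge A B C D k =
     (if k = 1 then B - A else if k = 2 then C - B else if k = 3 then D - C else A - D)"

definition nxt :: "nat \<Rightarrow> nat" where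
  "nxt k = (if k = 4 then 1 else k + 1)"

definition perimeter :: "complex \<Rightarrow> complex \<Rightarrow> complex \<Rightarrow> complex \<Rightarrow> real" where
  "perimeter A B C D = (\<Sum>k\<in>{1..4}. cmod (edge A B C D k))"

definition nondegenerate :: "complex \<Rightarrow> complex \<Rightarrow> complex \<Rightarrow> complex \<Rightarrow> bool" where
  "nondegenerate A B C D \<longleftrightarrow>
     (\<forall>k\<in>{1..4}. edge A B C D k \<noteq> 0 \<and> edge A B C D (nxt k) \<noteq> 0 \<and>
                  cross (edge A B C D k) (edge A B C D (nxt k)) \<noteq> 0)"

definition self_intersecting :: "complex \<Rightarrow> complex \<Rightarrow> complex \<Rightarrow> complex \<Rightarrow> bool" where
  "self_intersecting A B C D \<longleftrightarrow> nondegenerate A B C D \<and>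
     (closed_segment A B \<inter> closed_segment C D \<noteq> {} \<or>
      closed_segment B C \<inter> closed_segment D A \<noteq> {})"

text \<open>Signed (shoelace) area; positive iff the traversal is counterclockwise.\<close>
definition signed_area :: "complex \<Rightarrow> complex \<Rightarrow> complex \<Rightarrow> complex \<Rightarrow> real" where
  "signed_area A B C D = (cross A B + cross B C + cross C D + cross D A) / 2"

text \<open>Convex: non-degenerate, not self-intersecting, and every interior angle is less
  than pi, i.e. at every vertex the turn between consecutive edges has the same
  orientation as the (simple) polygon itself.\<close>
definition convex_quad :: "complex \<Rightarrow> complex \<Rightarrow> complex \<Rightarrow> complex \<Rightarrow> bool" where
  "convex_quad A B C D \<longleftrightarrow> nondegenerate A B C D \<and> \<not> self_intersecting A B C D \<and>
     (\<forall>k\<in>{1..4}. sgn (cross (edge A B C D k) (edge A B C D (nxt k)))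
                  = sgn (signed_area A B C D))"

definition assoc_roots :: "complex \<Rightarrow> complex \<Rightarrow> complex \<Rightarrow> complex \<Rightarrow> (nat \<Rightarrow> complex) \<Rightarrow> bool" where
  "assoc_roots A B C D u \<longleftrightarrow>
     (\<forall>k\<in>{1..4}. (u k)\<^sup>2 = edge A B C D k) \<and>
     (\<forall>k\<in>{1..3}. sgn (cross (u k) (u (k + 1))) = sgn (cross (edge A B C D k) (edge A B C D (k + 1))))"

definition dot4 :: "(nat \<Rightarrow> real) \<Rightarrow> (nat \<Rightarrow> real) \<Rightarrow> real" where
  "dot4 x y = (\<Sum>k\<in>{1..4}. x k * y k)"

text \<open>(c, d) is an orthonormal basis of the orthogonal complement of span(a, b), where
  a = Re u, b = Im u (Pi-perp is 2-dimensional since a, b are orthonormal).\<close>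
definition dual_basis :: "(nat \<Rightarrow> complex) \<Rightarrow> (nat \<Rightarrow> real) \<Rightarrow> (nat \<Rightarrow> real) \<Rightarrow> bool" where
  "dual_basis u c d \<longleftrightarrow>
     dot4 c (\<lambda>k. Re (u k)) = 0 \<and> dot4 c (\<lambda>k. Im (u k)) = 0 \<and>
     dot4 d (\<lambda>k. Re (u k)) = 0 \<and> dot4 d (\<lambda>k. Im (u k)) = 0 \<and>
     dot4 c c = 1 \<and> dot4 d d = 1 \<and> dot4 c d = 0"

definition dual_edge :: "(nat \<Rightarrow> real) \<Rightarrow> (nat \<Rightarrow> real) \<Rightarrow> nat \<Rightarrow> complex" where
  "dual_edge c d k = (Complex (c k) (d k))\<^sup>2"

end

theory Submission
  imports Defs
begin

text \<open>Write u_k = a_k + i b_k and omega_k = c_k + i d_k, so that the dual edges are omega_k^2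
  and a, b, c, d are the rows of an orthogonal 4x4 matrix. The turn at a vertex of a quadrangle with
  edges u_k^2 is cross(u_k^2, u_l^2) = 2 Re(cnj u_k u_l) cross(u_k, u_l). Convexity and the sign
  convention for the roots force Re(cnj u_k u_(k+1)) > 0 for k = 1, 2, 3 but Re(cnj u_4 u_1) < 0.
  Orthogonality of the columns gives Re(cnj omega_k omega_l) = - Re(cnj u_k u_l) for k \<noteq> l, and
  Hodge duality between the planes span(a, b) and span(c, d) identifies cross(omega_k, omega_l) with
  +/- det * cross(u_m, u_n) for the complementary pair {m, n}. Substituting, each turn of the dual
  quadrangle is -S det times a positive number, where S is the orientation of the original one, so
  the dual quadrangle turns consistently and is therefore convex.\<close>

lemma sum_atLeastAtMost_1_4: "(\<Sum>k\<in>{1..4::nat}. f k) = f 1 + f 2 + f 3 + f 4"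
proof -
  have "{1..4::nat} = {1,2,3,4}" by auto
  then show ?thesis by (simp add: add.assoc)
qed

lemma prod_atLeastAtMost_1_4: "(\<Prod>k\<in>{1..4::nat}. f k) = f 1 * f 2 * f 3 * f 4"
proof -
  have "{1..4::nat} = {1,2,3,4}" by auto
  then show ?thesis by (simp add: mult.assoc)
qed

lemma nxt_cases:
  "k \<in> {1..4} \<Longrightarrow>
    (k = 1 \<and> nxt k = 2) \<or> (k = 2 \<and> nxt k = 3) \<or> (k = 3 \<and> nxt k = 4) \<or> (k = 4 \<and> nxt k = 1)"
  by (auto simp: nxt_def)

lemma nxt_in_range: "k \<in> {1..4} \<Longrightarrow> nxt k \<in> {1..4}"
  by (auto simp: nxt_def)

lemma sgn_mult_self_pos: "(x::real) \<noteq> 0 \<Longrightarrow> sgn x * x > 0"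
  by (cases "x > 0") auto

lemma sgn_eq_if_mult_pos: "t * x > 0 \<Longrightarrow> t * y > 0 \<Longrightarrow> sgn x = sgn (y::real)"
  by (auto simp: zero_less_mult_iff)

lemma pos_if_sgn_mult_eq_sgn_right:
  fixes x y :: real
  assumes "sgn (x * y) = sgn y" "x * y \<noteq> 0"
  shows "x > 0"
  using assms by (auto simp: sgn_mult sgn_real_def zero_less_mult_iff split: if_splits)

lemma cross_power2: "cross (u\<^sup>2) (v\<^sup>2) = 2 * Re (cnj u * v) * cross u v"
  by (simp add: cross_def power2_eq_square algebra_simps)

lemma cross_nonzero_if_turn: "t * cross z w > 0 \<Longrightarrow> z \<noteq> 0 \<and> w \<noteq> 0 \<and> cross z w \<noteq> 0"
  by (auto simp: cross_def)

lemma Im_mult_in_half_plane: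
  fixes x y :: complex and s :: real
  assumes "Re x > 0" "Re y > 0" "s * Im x > 0" "s * Im y > 0"
  shows "s * Im (x * y) > 0"
proof -
  have "s * Im (x * y) = Re x * (s * Im y) + (s * Im x) * Re y" by (simp add: algebra_simps)
  then show ?thesis using assms by (simp add: add_pos_pos)
qed

lemma half_plane_mult_neq_pos_real:
  fixes x y :: complex and s r :: real
  assumes "s * Im x > 0" "s * Im y > 0" "r > 0"
  shows "x * y \<noteq> complex_of_real r"
proof
  assume xy: "x * y = complex_of_real r"
  have eq: "cnj x * complex_of_real r = complex_of_real ((cmod x)\<^sup>2) * y"
    unfolding xy[symmetric] complex_norm_square by (simp add: ac_simps)
  have "(cmod x)\<^sup>2 * Im y = Im (complex_of_real ((cmod x)\<^sup>2) * y)"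
    by (simp del: of_real_power)
  also have "\<dots> = - r * Im x" unfolding eq[symmetric] by simp
  finally have "(cmod x)\<^sup>2 * (s * Im y) = - r * (s * Im x)" by (simp add: algebra_simps)
  moreover have "x \<noteq> 0" using assms(1) by auto
  then have "(cmod x)\<^sup>2 * (s * Im y) > 0" using assms(2) by simp
  moreover have "r * (s * Im x) > 0" using assms(1,3) by simp
  ultimately show False by linarith
qed

lemma quadrant_prod4_neq_pos_real:
  fixes w1 w2 w3 w4 :: complex and s r :: real
  assumes "Re w1 > 0" "Re w2 > 0" "Re w3 > 0" "Re w4 > 0"
    and "s * Im w1 > 0" "s * Im w2 > 0" "s * Im w3 > 0" "s * Im w4 > 0"
    and "r > 0"
  shows "w1 * w2 * w3 * w4 \<noteq> complex_of_real r"
  using half_plane_mult_neq_pos_real[OF Im_mult_in_half_plane Im_mult_in_half_plane \<open>r > 0\<close>] assms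
  by (simp add: mult.assoc)

lemma closed_segments_disjoint_if_turns:
  fixes A B C D :: complex and t :: real
  assumes h1: "t * cross (B - A) (C - B) > 0" and h2: "t * cross (D - C) (A - D) > 0"
  shows "closed_segment A B \<inter> closed_segment C D = {}"
proof (rule ccontr)
  assume "closed_segment A B \<inter> closed_segment C D \<noteq> {}"
  then obtain x where "x \<in> closed_segment A B" "x \<in> closed_segment C D" by blast
  then obtain \<mu> \<nu> where \<mu>: "0 \<le> \<mu>" "x = (1 - \<mu>) *\<^sub>R A + \<mu> *\<^sub>R B"
    and \<nu>: "0 \<le> \<nu>" "x = (1 - \<nu>) *\<^sub>R C + \<nu> *\<^sub>R D"
    unfolding closed_segment_def by blast
  \<comment> \<open>f locates x relative to the diagonal AC: points of AB and of CD lie on opposite sides.\<close>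
  define f where "f = t * cross (C - A) (x - A)"
  have f1: "f = - \<mu> * (t * cross (B - A) (C - B))"
    unfolding f_def \<mu>(2) by (simp add: cross_def scaleR_conv_of_real algebra_simps)
  have f2: "f = \<nu> * (t * cross (D - C) (A - D))"
    unfolding f_def \<nu>(2) by (simp add: cross_def scaleR_conv_of_real algebra_simps)
  have "f \<le> 0" unfolding f1 using \<mu>(1) h1 by simp
  moreover have "f \<ge> 0" unfolding f2 using \<nu>(1) h2 by simp
  ultimately have "f = 0" by simp
  then have "\<mu> = 0" "\<nu> = 0" using f1 f2 h1 h2 by auto
  then have "A = C" using \<mu> \<nu> by simp
  then show False using h1 by (simp add: cross_def algebra_simps)
qed

lemma convex_quad_iff_turns:
  "convex_quad A B C D \<longleftrightarrow>
     (\<exists>t. \<forall>k\<in>{1..4}. t * cross (edge A B C D k) (edge A B C D (nxt k)) > 0)"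
proof
  assume cvx: "convex_quad A B C D"
  have "sgn (signed_area A B C D) * cross (edge A B C D k) (edge A B C D (nxt k)) > 0"
    if "k \<in> {1..4}" for k
  proof -
    have "cross (edge A B C D k) (edge A B C D (nxt k)) \<noteq> 0"
      using cvx that unfolding convex_quad_def nondegenerate_def by blast
    moreover have "sgn (cross (edge A B C D k) (edge A B C D (nxt k))) = sgn (signed_area A B C D)"
      using cvx that unfolding convex_quad_def by blast
    ultimately show ?thesis using sgn_mult_self_pos by metis
  qed
  then show "\<exists>t. \<forall>k\<in>{1..4}. t * cross (edge A B C D k) (edge A B C D (nxt k)) > 0" by blast
next
  assume "\<exists>t. \<forall>k\<in>{1..4}. t * cross (edge A B C D k) (edge A B C D (nxt k)) > 0"
  then obtain t
    where t: "\<And>k. k \<in> {1..4} \<Longrightarrow> t * cross (edge A B C D k) (edge A B C D (nxt k)) > 0"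
    by blast
  have h1: "t * cross (B - A) (C - B) > 0" and h2: "t * cross (C - B) (D - C) > 0"
    and h3: "t * cross (D - C) (A - D) > 0" and h4: "t * cross (A - D) (B - A) > 0"
    using t[of 1] t[of 2] t[of 3] t[of 4] by (simp_all add: edge_def nxt_def)
  have "nondegenerate A B C D"
    unfolding nondegenerate_def using t cross_nonzero_if_turn by blast
  moreover have "\<not> self_intersecting A B C D"
    unfolding self_intersecting_def
    using closed_segments_disjoint_if_turns[OF h1 h3] closed_segments_disjoint_if_turns[OF h2 h4]
    by simp
  moreover have "sgn (cross (edge A B C D k) (edge A B C D (nxt k))) = sgn (signed_area A B C D)"
    if "k \<in> {1..4}" for k
  proof -
    have area: "signed_area A B C D = (cross (B - A) (C - B) + cross (D - C) (A - D)) / 2"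
      unfolding signed_area_def by (simp add: cross_def algebra_simps)
    have "t * signed_area A B C D > 0" unfolding area using h1 h3 by (simp add: algebra_simps)
    then show ?thesis using t[OF that] sgn_eq_if_mult_pos by blast
  qed
  ultimately show "convex_quad A B C D" unfolding convex_quad_def by blast
qed

lemma convex_quad_of_steps:
  assumes sum: "w 1 + w 2 + w 3 + w 4 = 0"
    and turns: "\<forall>k\<in>{1..4}. t * cross (w k) (w (nxt k)) > 0"
  shows "convex_quad K (K + w 1) (K + w 1 + w 2) (K + w 1 + w 2 + w 3)"
proof -
  let ?e = "edge K (K + w 1) (K + w 1 + w 2) (K + w 1 + w 2 + w 3)"
  have "K - (K + w 1 + w 2 + w 3) = w 4" using sum by algebra
  then have edges: "?e k = w k" if "k \<in> {1..4}" for k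
    using nxt_cases[OF that] by (auto simp: edge_def)
  show ?thesis unfolding convex_quad_iff_turns
  proof (intro exI[of _ t] ballI)
    fix k :: nat assume k: "k \<in> {1..4}"
    show "t * cross (?e k) (?e (nxt k)) > 0"
      unfolding edges[OF k] edges[OF nxt_in_range[OF k]] using turns k by blast
  qed
qed

lemma dot4_commute: "dot4 x y = dot4 y x"
  by (simp add: dot4_def mult.commute)

definition orthonormal_columns ::
    "(nat \<Rightarrow> real) \<Rightarrow> (nat \<Rightarrow> real) \<Rightarrow> (nat \<Rightarrow> real) \<Rightarrow> (nat \<Rightarrow> real) \<Rightarrow> bool" where
  "orthonormal_columns a b c d \<longleftrightarrow>
     (\<forall>k\<in>{1..4}. \<forall>l\<in>{1..4}. a k * a l + b k * b l + c k * c l + d k * d l = of_bool (k = l))"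

lemma orthonormal_columns_if_orthonormal_rows:
  assumes "dot4 a a = 1" "dot4 b b = 1" "dot4 c c = 1" "dot4 d d = 1"
    and "dot4 a b = 0" "dot4 a c = 0" "dot4 a d = 0" "dot4 b c = 0" "dot4 b d = 0" "dot4 c d = 0"
  shows "orthonormal_columns a b c d"
proof -
  define idx :: "4 \<Rightarrow> nat"
    where "idx i = (if i = 1 then 1 else if i = 2 then 2 else if i = 3 then 3 else 4)" for i
  define row :: "4 \<Rightarrow> nat \<Rightarrow> real"
    where "row i = (if i = 1 then a else if i = 2 then b else if i = 3 then c else d)" for i
  define M :: "real^4^4" where "M = (\<chi> i j. row i (idx j))"
  have idx: "idx 1 = 1" "idx 2 = 2" "idx 3 = 3" "idx 4 = 4" by (simp_all add: idx_def)
  have "M ** transpose M = mat 1"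
    using assms unfolding dot4_def sum_atLeastAtMost_1_4
    by (simp add: M_def vec_eq_iff forall_4 matrix_matrix_mult_def sum_4 transpose_def mat_def
        row_def idx algebra_simps)
  then have "transpose M ** M = mat 1"
    using orthogonal_matrix orthogonal_matrix_transpose by (metis transpose_transpose)
  then have "\<forall>i j. (\<Sum>r\<in>UNIV. row r (idx i) * row r (idx j)) = of_bool (i = j)"
    by (simp add: vec_eq_iff M_def matrix_matrix_mult_def transpose_def mat_def)
  then have "\<forall>i j. a (idx i) * a (idx j) + b (idx i) * b (idx j) + c (idx i) * c (idx j)
      + d (idx i) * d (idx j) = of_bool (i = j)"
    by (simp add: sum_4 row_def)
  then show ?thesis
    unfolding orthonormal_columns_def forall_4 idx
    by (auto simp: atLeastAtMost_iff le_Suc_eq numeral_eq_Suc)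
qed

definition det4 :: "(nat \<Rightarrow> real) \<Rightarrow> (nat \<Rightarrow> real) \<Rightarrow> (nat \<Rightarrow> real) \<Rightarrow> (nat \<Rightarrow> real) \<Rightarrow> real" where
  "det4 x y z w =
      x 1 * y 2 * z 3 * w 4 - x 1 * y 2 * z 4 * w 3 - x 1 * y 3 * z 2 * w 4 + x 1 * y 3 * z 4 * w 2
    + x 1 * y 4 * z 2 * w 3 - x 1 * y 4 * z 3 * w 2 - x 2 * y 1 * z 3 * w 4 + x 2 * y 1 * z 4 * w 3
    + x 2 * y 3 * z 1 * w 4 - x 2 * y 3 * z 4 * w 1 - x 2 * y 4 * z 1 * w 3 + x 2 * y 4 * z 3 * w 1
    + x 3 * y 1 * z 2 * w 4 - x 3 * y 1 * z 4 * w 2 - x 3 * y 2 * z 1 * w 4 + x 3 * y 2 * z 4 * w 1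
    + x 3 * y 4 * z 1 * w 2 - x 3 * y 4 * z 2 * w 1 - x 4 * y 1 * z 2 * w 3 + x 4 * y 1 * z 3 * w 2
    + x 4 * y 2 * z 1 * w 3 - x 4 * y 2 * z 3 * w 1 - x 4 * y 3 * z 1 * w 2 + x 4 * y 3 * z 2 * w 1"

lemma det4_orthonormal_minor:
  assumes "orthonormal_columns a b c d" "k \<in> {1..4}" "l \<in> {1..4}"
  shows "det4 a b (\<lambda>j. of_bool (k = j)) (\<lambda>j. of_bool (l = j))
    = (c k * d l - d k * c l) * det4 a b c d"
proof -
  \<comment> \<open>A polynomial identity in arbitrary a, b, c, d; orthonormality of the columns turns the
    last two arguments on its left into unit vectors.\<close>
  have "det4 a b (\<lambda>j. a k * a j + b k * b j + c k * c j + d k * d j)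
                 (\<lambda>j. a l * a j + b l * b j + c l * c j + d l * d j)
        = (c k * d l - d k * c l) * det4 a b c d"
    unfolding det4_def by algebra
  moreover have "det4 a b (\<lambda>j. a k * a j + b k * b j + c k * c j + d k * d j)
                 (\<lambda>j. a l * a j + b l * b j + c l * c j + d l * d j)
        = det4 a b (\<lambda>j. of_bool (k = j)) (\<lambda>j. of_bool (l = j))"
    using assms unfolding orthonormal_columns_def det4_def by simp
  ultimately show ?thesis by simp
qed

lemma root_frame_orthonormal:
  assumes roots: "\<And>k. k \<in> {1..4} \<Longrightarrow> (u k)\<^sup>2 = edge A B C D k"
    and "perimeter A B C D = 2"
  shows "dot4 (\<lambda>k. Re (u k)) (\<lambda>k. Re (u k)) = 1" "dot4 (\<lambda>k. Im (u k)) (\<lambda>k. Im (u k)) = 1"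
    and "dot4 (\<lambda>k. Re (u k)) (\<lambda>k. Im (u k)) = 0"
proof -
  have "(u 1)\<^sup>2 + (u 2)\<^sup>2 + (u 3)\<^sup>2 + (u 4)\<^sup>2 = 0"
    using roots[of 1] roots[of 2] roots[of 3] roots[of 4] by (simp add: edge_def)
  from arg_cong[OF this, of Re] arg_cong[OF this, of Im]
  have re: "(Re (u 1))\<^sup>2 - (Im (u 1))\<^sup>2 + ((Re (u 2))\<^sup>2 - (Im (u 2))\<^sup>2)
      + ((Re (u 3))\<^sup>2 - (Im (u 3))\<^sup>2) + ((Re (u 4))\<^sup>2 - (Im (u 4))\<^sup>2) = 0"
    and im: "Re (u 1) * Im (u 1) + Re (u 2) * Im (u 2) + Re (u 3) * Im (u 3) + Re (u 4) * Im (u 4) = 0"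
    by (simp_all add: power2_eq_square mult.commute)
  have "cmod ((u 1)\<^sup>2) + cmod ((u 2)\<^sup>2) + cmod ((u 3)\<^sup>2) + cmod ((u 4)\<^sup>2) = 2"
    using assms(2) roots[of 1] roots[of 2] roots[of 3] roots[of 4]
    unfolding perimeter_def sum_atLeastAtMost_1_4 by simp
  then have norm: "(Re (u 1))\<^sup>2 + (Im (u 1))\<^sup>2 + ((Re (u 2))\<^sup>2 + (Im (u 2))\<^sup>2)
      + ((Re (u 3))\<^sup>2 + (Im (u 3))\<^sup>2) + ((Re (u 4))\<^sup>2 + (Im (u 4))\<^sup>2) = 2"
    by (simp only: norm_power cmod_power2)
  show "dot4 (\<lambda>k. Re (u k)) (\<lambda>k. Re (u k)) = 1" "dot4 (\<lambda>k. Im (u k)) (\<lambda>k. Im (u k)) = 1"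
    and "dot4 (\<lambda>k. Re (u k)) (\<lambda>k. Im (u k)) = 0"
    using re im norm unfolding dot4_def sum_atLeastAtMost_1_4 power2_eq_square by linarith+
qed

lemma dual_edges_sum_zero:
  assumes "dot4 c c = dot4 d d" "dot4 c d = 0"
  shows "dual_edge c d 1 + dual_edge c d 2 + dual_edge c d 3 + dual_edge c d 4 = 0"
  using assms unfolding dot4_def sum_atLeastAtMost_1_4
  by (simp add: complex_eq_iff dual_edge_def power2_eq_square algebra_simps)

lemma assoc_root_turns:
  fixes u :: "nat \<Rightarrow> complex" and S :: real
  assumes turns: "\<And>k. k \<in> {1..4} \<Longrightarrow> S * cross ((u k)\<^sup>2) ((u (nxt k))\<^sup>2) > 0"
    and sgns: "\<And>k. k \<in> {1..3} \<Longrightarrow>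
      sgn (cross (u k) (u (k + 1))) = sgn (cross ((u k)\<^sup>2) ((u (k + 1))\<^sup>2))"
  shows "Re (cnj (u 1) * u 2) > 0" "Re (cnj (u 2) * u 3) > 0" "Re (cnj (u 3) * u 4) > 0"
    and "Re (cnj (u 4) * u 1) < 0"
    and "S * cross (u 1) (u 2) > 0" "S * cross (u 2) (u 3) > 0" "S * cross (u 3) (u 4) > 0"
    and "S * cross (u 4) (u 1) < 0"
proof -
  have turn: "2 * Re (cnj (u k) * u l) * (S * cross (u k) (u l)) > 0"
    if "k \<in> {1..4}" "l = nxt k" for k l
    using turns[OF that(1)] that(2) by (simp only: cross_power2 mult.left_commute)
  have consecutive: "Re (cnj (u k) * u l) > 0 \<and> S * cross (u k) (u l) > 0"
    if k: "k \<in> {1..3}" and l: "l = k + 1" for k l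
  proof -
    have turn_kl: "2 * Re (cnj (u k) * u l) * (S * cross (u k) (u l)) > 0"
      using k l by (intro turn) (auto simp: nxt_def)
    have "sgn (2 * Re (cnj (u k) * u l) * cross (u k) (u l)) = sgn (cross (u k) (u l))"
      using sgns[OF k] l by (simp only: cross_power2)
    moreover have "2 * Re (cnj (u k) * u l) * cross (u k) (u l) \<noteq> 0"
      using turn_kl by auto
    ultimately have "2 * Re (cnj (u k) * u l) > 0" by (rule pos_if_sgn_mult_eq_sgn_right)
    then show ?thesis using zero_less_mult_pos[OF turn_kl] by simp
  qed
  have c12: "Re (cnj (u 1) * u 2) > 0 \<and> S * cross (u 1) (u 2) > 0"
    and c23: "Re (cnj (u 2) * u 3) > 0 \<and> S * cross (u 2) (u 3) > 0"
    and c34: "Re (cnj (u 3) * u 4) > 0 \<and> S * cross (u 3) (u 4) > 0"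
    by (rule consecutive; simp)+
  then show "Re (cnj (u 1) * u 2) > 0" "Re (cnj (u 2) * u 3) > 0" "Re (cnj (u 3) * u 4) > 0"
    and "S * cross (u 1) (u 2) > 0" "S * cross (u 2) (u 3) > 0" "S * cross (u 3) (u 4) > 0"
    by blast+
  have turn41: "2 * Re (cnj (u 4) * u 1) * (S * cross (u 4) (u 1)) > 0"
    by (rule turn) (simp_all add: nxt_def)
  have "\<not> Re (cnj (u 4) * u 1) > 0"
  proof
    assume Re41: "Re (cnj (u 4) * u 1) > 0"
    then have cross41: "S * cross (u 4) (u 1) > 0" using zero_less_mult_pos[OF turn41] by simp
    have "u k \<noteq> 0" if "k \<in> {1..4}" for k
      using turns[OF that] by (auto simp: cross_def)
    then have "(\<Prod>k\<in>{1..4}. (cmod (u k))\<^sup>2) > 0" by (intro prod_pos) simp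
    \<comment> \<open>The four products cnj u_k * u_(k+1) lie in one open quadrant, yet they multiply to
      the positive real number |u_1|^2 |u_2|^2 |u_3|^2 |u_4|^2.\<close>
    then have "cnj (u 1) * u 2 * (cnj (u 2) * u 3) * (cnj (u 3) * u 4) * (cnj (u 4) * u 1)
      \<noteq> complex_of_real (\<Prod>k\<in>{1..4}. (cmod (u k))\<^sup>2)"
      by (rule quadrant_prod4_neq_pos_real[rotated 8])
        (use c12 c23 c34 Re41 cross41 in \<open>auto simp: cross_def\<close>)
    moreover have "cnj (u 1) * u 2 * (cnj (u 2) * u 3) * (cnj (u 3) * u 4) * (cnj (u 4) * u 1)
      = complex_of_real (\<Prod>k\<in>{1..4}. (cmod (u k))\<^sup>2)"
      unfolding prod_atLeastAtMost_1_4 of_real_mult complex_norm_square by (simp only: ac_simps)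
    ultimately show False by contradiction
  qed
  moreover have "Re (cnj (u 4) * u 1) \<noteq> 0"
    using turn41 by (metis mult_zero_left mult_zero_right order_less_irrefl)
  ultimately show "Re (cnj (u 4) * u 1) < 0" "S * cross (u 4) (u 1) < 0"
    using turn41 by (auto simp: zero_less_mult_iff)
qed

lemma dual_turns:
  fixes u \<omega> :: "nat \<Rightarrow> complex" and S :: real
  assumes orth:
      "orthonormal_columns (\<lambda>k. Re (u k)) (\<lambda>k. Im (u k)) (\<lambda>k. Re (\<omega> k)) (\<lambda>k. Im (\<omega> k))"
    and "Re (cnj (u 1) * u 2) > 0" "Re (cnj (u 2) * u 3) > 0" "Re (cnj (u 3) * u 4) > 0"
    and "Re (cnj (u 4) * u 1) < 0"
    and "S * cross (u 1) (u 2) > 0" "S * cross (u 2) (u 3) > 0" "S * cross (u 3) (u 4) > 0"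
    and "S * cross (u 4) (u 1) < 0"
  shows "\<exists>t. \<forall>k\<in>{1..4}. t * cross ((\<omega> k)\<^sup>2) ((\<omega> (nxt k))\<^sup>2) > 0"
proof -
  define \<sigma> where "\<sigma> = det4 (\<lambda>k. Re (u k)) (\<lambda>k. Im (u k)) (\<lambda>k. Re (\<omega> k)) (\<lambda>k. Im (\<omega> k))"
  have minor: "det4 (\<lambda>k. Re (u k)) (\<lambda>k. Im (u k)) (\<lambda>j. of_bool (k = j)) (\<lambda>j. of_bool (l = j))
      = \<sigma> * cross (\<omega> k) (\<omega> l)" if "k \<in> {1..4}" "l \<in> {1..4}" for k l
    using det4_orthonormal_minor[OF orth that] by (simp add: \<sigma>_def cross_def)
  have hodge: "\<sigma> * cross (\<omega> 1) (\<omega> 2) = cross (u 3) (u 4)"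
    "\<sigma> * cross (\<omega> 2) (\<omega> 3) = - cross (u 4) (u 1)"
    "\<sigma> * cross (\<omega> 3) (\<omega> 4) = cross (u 1) (u 2)"
    "\<sigma> * cross (\<omega> 4) (\<omega> 1) = - cross (u 2) (u 3)"
    using minor[of 1 2] minor[of 2 3] minor[of 3 4] minor[of 4 1]
    by (simp_all add: det4_def cross_def algebra_simps)
  have dual_turn: "- S * \<sigma> * cross ((\<omega> k)\<^sup>2) ((\<omega> l)\<^sup>2)
      = 2 * Re (cnj (u k) * u l) * (S * (\<sigma> * cross (\<omega> k) (\<omega> l)))"
    if "k \<in> {1..4}" "l \<in> {1..4}" "k \<noteq> l" for k l
  proof -
    have "Re (u k) * Re (u l) + Im (u k) * Im (u l) + Re (\<omega> k) * Re (\<omega> l)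
        + Im (\<omega> k) * Im (\<omega> l) = 0"
      using orth that unfolding orthonormal_columns_def by simp
    then have Re_dual: "Re (cnj (\<omega> k) * \<omega> l) = - Re (cnj (u k) * u l)" by simp
    show ?thesis unfolding cross_power2 Re_dual by (simp add: algebra_simps)
  qed
  have e1: "- S * \<sigma> * cross ((\<omega> 1)\<^sup>2) ((\<omega> 2)\<^sup>2)
      = 2 * Re (cnj (u 1) * u 2) * (S * cross (u 3) (u 4))"
    and e2: "- S * \<sigma> * cross ((\<omega> 2)\<^sup>2) ((\<omega> 3)\<^sup>2)
      = 2 * Re (cnj (u 2) * u 3) * (S * - cross (u 4) (u 1))"
    and e3: "- S * \<sigma> * cross ((\<omega> 3)\<^sup>2) ((\<omega> 4)\<^sup>2)
      = 2 * Re (cnj (u 3) * u 4) * (S * cross (u 1) (u 2))"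
    and e4: "- S * \<sigma> * cross ((\<omega> 4)\<^sup>2) ((\<omega> 1)\<^sup>2)
      = 2 * Re (cnj (u 4) * u 1) * (S * - cross (u 2) (u 3))"
    using dual_turn[of 1 2] dual_turn[of 2 3] dual_turn[of 3 4] dual_turn[of 4 1]
    unfolding hodge by simp_all
  have "- S * \<sigma> * cross ((\<omega> 1)\<^sup>2) ((\<omega> 2)\<^sup>2) > 0"
    unfolding e1 by (rule mult_pos_pos) (use assms(2,8) in simp_all)
  moreover have "- S * \<sigma> * cross ((\<omega> 2)\<^sup>2) ((\<omega> 3)\<^sup>2) > 0"
    unfolding e2 by (rule mult_pos_pos) (use assms(3,9) in simp_all)
  moreover have "- S * \<sigma> * cross ((\<omega> 3)\<^sup>2) ((\<omega> 4)\<^sup>2) > 0"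
    unfolding e3 by (rule mult_pos_pos) (use assms(4,6) in simp_all)
  moreover have "- S * \<sigma> * cross ((\<omega> 4)\<^sup>2) ((\<omega> 1)\<^sup>2) > 0"
    unfolding e4 by (rule mult_neg_neg) (use assms(5,7) in simp_all)
  ultimately have "- S * \<sigma> * cross ((\<omega> k)\<^sup>2) ((\<omega> (nxt k))\<^sup>2) > 0" if "k \<in> {1..4}" for k
    using nxt_cases[OF that] by auto
  then show ?thesis by blast
qed

theorem corollary5p1:
  fixes A B C D K :: complex and u :: "nat \<Rightarrow> complex" and c d :: "nat \<Rightarrow> real"
  assumes "convex_quad A B C D"
    and "perimeter A B C D = 2"
    and "assoc_roots A B C D u"
    and "dual_basis u c d"
  shows "convex_quad K (K + dual_edge c d 1) (K + dual_edge c d 1 + dual_edge c d 2)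
           (K + dual_edge c d 1 + dual_edge c d 2 + dual_edge c d 3)"
proof -
  have roots: "\<And>k. k \<in> {1..4} \<Longrightarrow> (u k)\<^sup>2 = edge A B C D k"
    and sgns: "\<And>k. k \<in> {1..3} \<Longrightarrow>
      sgn (cross (u k) (u (k + 1))) = sgn (cross ((u k)\<^sup>2) ((u (k + 1))\<^sup>2))"
    using assms(3) unfolding assoc_roots_def by auto
  obtain S where "\<forall>k\<in>{1..4}. S * cross (edge A B C D k) (edge A B C D (nxt k)) > 0"
    using assms(1) convex_quad_iff_turns by blast
  then have "S * cross ((u k)\<^sup>2) ((u (nxt k))\<^sup>2) > 0" if "k \<in> {1..4}" for k
    using that roots[OF that] roots[of "nxt k"] by (auto simp: nxt_def)
  note root_turns = assoc_root_turns[OF this sgns]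
  have "orthonormal_columns (\<lambda>k. Re (u k)) (\<lambda>k. Im (u k))
      (\<lambda>k. Re (Complex (c k) (d k))) (\<lambda>k. Im (Complex (c k) (d k)))"
    using root_frame_orthonormal[OF roots assms(2)] assms(4) unfolding dual_basis_def
    by (intro orthonormal_columns_if_orthonormal_rows) (simp_all add: dot4_commute)
  from dual_turns[OF this root_turns] obtain t
    where "\<forall>k\<in>{1..4}.
      t * cross ((Complex (c k) (d k))\<^sup>2) ((Complex (c (nxt k)) (d (nxt k)))\<^sup>2) > 0"
    by blast
  then have "\<forall>k\<in>{1..4}. t * cross (dual_edge c d k) (dual_edge c d (nxt k)) > 0"
    unfolding dual_edge_def .
  moreover have "dual_edge c d 1 + dual_edge c d 2 + dual_edge c d 3 + dual_edge c d 4 = 0"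
    using assms(4) unfolding dual_basis_def by (intro dual_edges_sum_zero) simp_all
  ultimately show ?thesis by (rule convex_quad_of_steps[where w = "dual_edge c d", rotated])
qed

end
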